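(* For every state $x\in\mathcal X$ and every dataset $\mathbb D_N$, the GP-CBF-SOCP at $x$, $$\min_{u\in\mathbb R^m}\ \|u-u_{\text{ref}}(x)\|_2^2\quad\text{s.t.}\quad L_{\tilde f}B(x)+L_{\tilde g}B(x)u+\mu_B(x,u|\mathbb D_N)-\beta\,\sigma_B(x,u|\mathbb D_N)+\gamma(B(x))\ge 0,$$ is a convex optimization problem. Specifically, it is a second-order cone program: it has the same minimizer(s) $u$ as a problem with a linear objective subject to second-order cone constraints.
   Context: Consider the control-affine system $\dot x=f(x)+g(x)u$ with state $x\in\mathcal X\subset\mathbb R^n$ and input $u\in\mathbb R^m$. Here $f:\mathcal X\to\mathbb R^n$ and $g:\mathcal X\to\mathbb R^{n\times m}$ are locally Lipschitz and unknown. A nominal model $\tilde f:\mathcal X\to\mathbb R^n$, $\tilde g:\mathcal X\to\mathbb R^{n\times m}$ is available. Let $B:\mathcal X\to\mathbb R$ be continuously differentiable, let $\gamma$ be an extended class-$\mathcal K_\infty$ function, and let $u_{\text{ref}}:\mathcal X\to\mathbb R^m$ be a reference controller. Lie derivatives: $L_{\tilde f}B(x)=\nabla B(x)\tilde f(x)\in\mathbb R$ and $L_{\tilde g}B(x)=\nabla B(x)\tilde g(x)\in\mathbb R^{1\times m}$; $L_fB$ and $L_gB$ are defined in the same way. Set $\Delta_B(x,u)=(L_fB-L_{\tilde f}B)(x)+(L_gB-L_{\tilde g}B)(x)u$. A dataset $\mathbb D_N=\{((x_j,u_j),z_j)\}_{j=1}^N$ consists of noisy measurements $z_j=\Delta_B(x_j,u_j)+\epsilon_j$.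 GP model (affine dot product kernel): - Kernels $k_1,\dots,k_{m+1}:\mathcal X\times\mathcal X\to\mathbb R$ are given, and $k_c((x,y),(x',y'))=y^T\mathrm{diag}(k_1(x,x'),\dots,k_{m+1}(x,x'))y'$ for $y,y'\in\mathbb R^{m+1}$. - Let $y_j=[1,u_j^T]^T$, $\mathbf z=(z_1,\dots,z_N)^T$, let $\sigma_n>0$ be the noise parameter, and let $K_c\in\mathbb R^{N\times N}$ have entries $k_c((x_i,y_i),(x_j,y_j))$. - Let $K_{**}(x)=\mathrm{diag}(k_1(x,x),\dots,k_{m+1}(x,x))$, and let $K_{*Y}(x)\in\mathbb R^{(m+1)\times N}$ have $(i,j)$ entry $k_i(x,x_j)(y_j)_i$. - Define $m_B(x|\mathbb D_N)=K_{*Y}(K_c+\sigma_n^2I)^{-1}\mathbf z\in\mathbb R^{m+1}$ and $\Sigma_B(x|\mathbb D_N)=K_{**}-K_{*Y}(K_c+\sigma_n^2I)^{-1}K_{*Y}^T$. The matrix $\Sigma_B(x|\mathbb D_N)$ is positive definite. - The GP posterior mean and standard deviation of $\Delta_B$ are $\mu_B(x,u|\mathbb D_N)=m_B(x|\mathbb D_N)^T[1;u]$ and $\sigma_B(x,u|\mathbb D_N)=\sqrt{[1,u^T]\Sigma_B(x|\mathbb D_N)[1;u]}$. $\beta>0$ is a given constant. *)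

theory Defs
  imports "HOL-Analysis.Analysis"
begin

definition ext_class_K_inf :: "(real \<Rightarrow> real) \<Rightarrow> bool" where
  "ext_class_K_inf \<gamma> \<longleftrightarrow> continuous_on UNIV \<gamma> \<and> strict_mono \<gamma> \<and> \<gamma> 0 = 0 \<and>
     filterlim \<gamma> at_top at_top \<and> filterlim \<gamma> at_bot at_bot"

definition psd_kernel :: "('a \<Rightarrow> 'a \<Rightarrow> real) \<Rightarrow> bool" where
  "psd_kernel k \<longleftrightarrow> (\<forall>x y. k x y = k y x) \<and>
     (\<forall>xs c. length c = length xs \<longrightarrow>
        (\<Sum>i<length xs. \<Sum>j<length xs. c!i * c!j * k (xs!i) (xs!j)) \<ge> 0)"

text \<open>Index set of R^(m+1): the option type; None is the constant component 1,
  Some i is the i-th input component.\<close>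


definition Lie_f :: "(real^'n \<Rightarrow> real^'n) \<Rightarrow> (real^'n \<Rightarrow> real^'n) \<Rightarrow> real^'n \<Rightarrow> real" where
  "Lie_f gradB f x = gradB x \<bullet> f x"

definition Lie_g :: "(real^'n \<Rightarrow> real^'n) \<Rightarrow> (real^'n \<Rightarrow> real^'m^'n) \<Rightarrow> real^'n \<Rightarrow> real^'m" where
  "Lie_g gradB g x = transpose (g x) *v gradB x"

definition yvec :: "real^'m \<Rightarrow> real^('m option)" where
  "yvec u = (\<chi> i. case i of None \<Rightarrow> 1 | Some j \<Rightarrow> u $ j)"

definition Kc :: "('m::finite option \<Rightarrow> real^'n \<Rightarrow> real^'n \<Rightarrow> real) \<Rightarrow> ('d \<Rightarrow> real^'n) \<Rightarrow> ('d::finite \<Rightarrow> real^'m)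
    \<Rightarrow> real^'d^'d" where
  "Kc k xs us = (\<chi> i j. \<Sum>l\<in>UNIV. (yvec (us i)) $ l * k l (xs i) (xs j) * (yvec (us j)) $ l)"

definition Kss :: "('m::finite option \<Rightarrow> real^'n \<Rightarrow> real^'n \<Rightarrow> real) \<Rightarrow> real^'n \<Rightarrow> real^('m option)^('m option)" where
  "Kss k x = (\<chi> i j. if i = j then k i x x else 0)"

definition KsY :: "('m::finite option \<Rightarrow> real^'n \<Rightarrow> real^'n \<Rightarrow> real) \<Rightarrow> ('d \<Rightarrow> real^'n) \<Rightarrow> ('d::finite \<Rightarrow> real^'m)
    \<Rightarrow> real^'n \<Rightarrow> real^'d^('m option)" where
  "KsY k xs us x = (\<chi> i j. k i x (xs j) * (yvec (us j)) $ i)"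

definition Kreg_inv :: "('m::finite option \<Rightarrow> real^'n \<Rightarrow> real^'n \<Rightarrow> real) \<Rightarrow> ('d \<Rightarrow> real^'n) \<Rightarrow> ('d::finite \<Rightarrow> real^'m)
    \<Rightarrow> real \<Rightarrow> real^'d^'d" where
  "Kreg_inv k xs us \<sigma>n = matrix_inv (Kc k xs us + (\<sigma>n ^ 2) *\<^sub>R mat 1)"

definition mB :: "('m option \<Rightarrow> real^'n \<Rightarrow> real^'n \<Rightarrow> real) \<Rightarrow> ('d::finite \<Rightarrow> real^'n) \<Rightarrow> ('d::finite \<Rightarrow> real^'m)
    \<Rightarrow> real^'d \<Rightarrow> real \<Rightarrow> real^'n \<Rightarrow> real^('m option)" where
  "mB k xs us z \<sigma>n x = KsY k xs us x *v (Kreg_inv k xs us \<sigma>n *v z)"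

definition SigmaB :: "('m option \<Rightarrow> real^'n \<Rightarrow> real^'n \<Rightarrow> real) \<Rightarrow> ('d::finite \<Rightarrow> real^'n) \<Rightarrow> ('d::finite \<Rightarrow> real^'m)
    \<Rightarrow> real \<Rightarrow> real^'n \<Rightarrow> real^('m option)^('m option)" where
  "SigmaB k xs us \<sigma>n x = Kss k x - KsY k xs us x ** Kreg_inv k xs us \<sigma>n ** transpose (KsY k xs us x)"

definition muB :: "('m option \<Rightarrow> real^'n \<Rightarrow> real^'n \<Rightarrow> real) \<Rightarrow> ('d::finite \<Rightarrow> real^'n) \<Rightarrow> ('d::finite \<Rightarrow> real^'m)
    \<Rightarrow> real^'d \<Rightarrow> real \<Rightarrow> real^'n \<Rightarrow> real^'m \<Rightarrow> real" where
  "muB k xs us z \<sigma>n x u = mB k xs us z \<sigma>n x \<bullet> yvec u"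

definition sigB :: "('m option \<Rightarrow> real^'n \<Rightarrow> real^'n \<Rightarrow> real) \<Rightarrow> ('d::finite \<Rightarrow> real^'n) \<Rightarrow> ('d::finite \<Rightarrow> real^'m)
    \<Rightarrow> real \<Rightarrow> real^'n \<Rightarrow> real^'m \<Rightarrow> real" where
  "sigB k xs us \<sigma>n x u = sqrt (yvec u \<bullet> (SigmaB k xs us \<sigma>n x *v yvec u))"

definition is_minimizer :: "('a \<Rightarrow> bool) \<Rightarrow> ('a \<Rightarrow> real) \<Rightarrow> 'a \<Rightarrow> bool" where
  "is_minimizer F J u \<longleftrightarrow> F u \<and> (\<forall>v. F v \<longrightarrow> J u \<le> J v)"

definition convex_problem :: "('a::real_vector \<Rightarrow> real) \<Rightarrow> ('a \<Rightarrow> real) \<Rightarrow> bool" where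
  "convex_problem J h \<longleftrightarrow> convex_on UNIV J \<and> convex_on UNIV (\<lambda>u. - h u)"

text \<open>Second-order cone programs in the variable (u,s), u :: real^'m, s a real vector
  of length p (auxiliary variables, given as a list).\<close>

type_synonym 'm aff = "(real^'m) \<times> real list \<times> real"

definition aff_eval :: "'m::finite aff \<Rightarrow> real^'m \<Rightarrow> real list \<Rightarrow> real" where
  "aff_eval A u s = fst A \<bullet> u + (\<Sum>i<length s. fst (snd A) ! i * s ! i) + snd (snd A)"

definition soc_feasible :: "('m::finite aff list \<times> 'm aff) list \<Rightarrow> real^'m \<Rightarrow> real list \<Rightarrow> bool" where
  "soc_feasible cons u s \<longleftrightarrow>
     (\<forall>(As, d) \<in> set cons. sqrt (\<Sum>l\<leftarrow>As. (aff_eval l u s)\<^sup>2) \<le> aff_eval d u s)"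

definition lin_obj :: "(real^'m::finite) \<times> real list \<Rightarrow> real^'m \<Rightarrow> real list \<Rightarrow> real" where
  "lin_obj c u s = fst c \<bullet> u + (\<Sum>i<length s. snd c ! i * s ! i)"

definition socp_minimizer ::
  "nat \<Rightarrow> (real^'m::finite) \<times> real list \<Rightarrow> ('m aff list \<times> 'm aff) list \<Rightarrow> real^'m \<Rightarrow> real list \<Rightarrow> bool" where
  "socp_minimizer p c cons u s \<longleftrightarrow>
     is_minimizer (\<lambda>(u', s'). length s' = p \<and> soc_feasible cons u' s')
                  (\<lambda>(u', s'). lin_obj c u' s') (u, s)"

end

theory Submission
  imports Defs
begin

(* Since \<Sigma>_B(x) is positive definite it has a Cholesky factor L, so
   \<sigma>_B(x,u) = ||L [1; u]|| is the Euclidean norm of an affine function of u, while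
   \<mu>_B(x,u) is affine in u.  The safety constraint therefore reads
   \<beta> ||A u + c|| <= a + b.u, a second-order cone constraint whose constraint function is
   concave, and minimising ||u - u_ref||^2 has the same minimisers as minimising an epigraph
   variable t subject to the second cone constraint ||u - u_ref|| <= t.
   Only \<beta> > 0 and the positive definiteness of \<Sigma>_B(x) are needed. *)

section \<open>Cholesky factorisation of positive definite forms\<close>

definition quad_form :: "('a \<Rightarrow> 'a \<Rightarrow> real) \<Rightarrow> 'a set \<Rightarrow> ('a \<Rightarrow> real) \<Rightarrow> real" where
  "quad_form S I y = (\<Sum>i\<in>I. \<Sum>j\<in>I. S i j * y i * y j)"

definition pos_def_form :: "('a \<Rightarrow> 'a \<Rightarrow> real) \<Rightarrow> 'a set \<Rightarrow> bool" where
  "pos_def_form S I \<longleftrightarrow> (\<forall>i\<in>I. \<forall>j\<in>I. S i j = S j i) \<and>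
     (\<forall>y. (\<exists>i\<in>I. y i \<noteq> 0) \<longrightarrow> 0 < quad_form S I y)"

definition schur_complement :: "('a \<Rightarrow> 'a \<Rightarrow> real) \<Rightarrow> 'a \<Rightarrow> 'a \<Rightarrow> 'a \<Rightarrow> real" where
  "schur_complement S a i j = S i j - S i a * S a j / S a a"

lemma pos_def_formD:
  assumes "pos_def_form S I"
  shows pos_def_form_sym: "\<And>i j. i \<in> I \<Longrightarrow> j \<in> I \<Longrightarrow> S i j = S j i"
    and pos_def_form_pos: "\<And>y. \<exists>i\<in>I. y i \<noteq> 0 \<Longrightarrow> 0 < quad_form S I y"
  using assms unfolding pos_def_form_def by blast+

lemma quad_form_cong: "(\<And>i. i \<in> I \<Longrightarrow> y i = y' i) \<Longrightarrow> quad_form S I y = quad_form S I y'"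
  unfolding quad_form_def by (intro sum.cong refl) auto

lemma quad_form_insert:
  assumes "finite I" "a \<notin> I" and sym: "\<And>j. j \<in> I \<Longrightarrow> S j a = S a j"
  shows "quad_form S (insert a I) y
           = S a a * (y a)\<^sup>2 + 2 * y a * (\<Sum>j\<in>I. S a j * y j) + quad_form S I y"
proof -
  have col: "(\<Sum>i\<in>I. S i a * y i * y a) = y a * (\<Sum>j\<in>I. S a j * y j)"
    by (simp add: sum_distrib_left sym mult_ac cong: sum.cong)
  have "quad_form S (insert a I) y = S a a * y a * y a + (\<Sum>j\<in>I. S a j * y a * y j)
      + (\<Sum>i\<in>I. S i a * y i * y a) + quad_form S I y"
    unfolding quad_form_def using assms(1,2) by (simp add: sum.distrib)
  then show ?thesis
    unfolding col by (simp add: sum_distrib_left power2_eq_square mult_ac)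
qed

lemma quad_form_schur_complement:
  assumes "finite I" "a \<notin> I" and sym: "\<And>j. j \<in> I \<Longrightarrow> S j a = S a j" and pos: "0 < S a a"
  shows "quad_form S (insert a I) y
           = S a a * (y a + (\<Sum>j\<in>I. S a j * y j) / S a a)\<^sup>2 + quad_form (schur_complement S a) I y"
proof -
  define T where "T = (\<Sum>j\<in>I. S a j * y j)"
  have "quad_form (schur_complement S a) I y
      = (\<Sum>i\<in>I. \<Sum>j\<in>I. S i j * y i * y j - (S i a * y i) * (S a j * y j) / S a a)"
    unfolding quad_form_def schur_complement_def by (simp add: algebra_simps)
  also have "\<dots> = quad_form S I y - (\<Sum>i\<in>I. \<Sum>j\<in>I. (S i a * y i) * (S a j * y j)) / S a a"
    unfolding quad_form_def by (simp add: sum_subtractf sum_divide_distrib)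
  also have "(\<Sum>i\<in>I. \<Sum>j\<in>I. (S i a * y i) * (S a j * y j)) = T\<^sup>2"
    unfolding T_def power2_eq_square sum_product by (simp add: sym cong: sum.cong)
  finally have "quad_form (schur_complement S a) I y = quad_form S I y - T\<^sup>2 / S a a" .
  moreover have "quad_form S (insert a I) y = S a a * (y a)\<^sup>2 + 2 * y a * T + quad_form S I y"
    unfolding T_def by (rule quad_form_insert[where S=S, OF assms(1-3)])
  moreover have "S a a * (y a + T / S a a)\<^sup>2 = S a a * (y a)\<^sup>2 + 2 * y a * T + T\<^sup>2 / S a a"
    using pos by (simp add: field_simps power2_eq_square)
  ultimately show ?thesis
    unfolding T_def[symmetric] by linarith
qed

lemma pos_def_form_pivot_pos:
  assumes "finite I" "a \<notin> I" and pd: "pos_def_form S (insert a I)"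
  shows "0 < S a a"
proof -
  have sym: "\<And>j. j \<in> I \<Longrightarrow> S j a = S a j" using pos_def_form_sym[OF pd] by blast
  define e :: "'a \<Rightarrow> real" where "e i = (if i = a then 1 else 0)" for i
  have "0 < quad_form S (insert a I) e"
    by (intro pos_def_form_pos[OF pd]) (auto simp: e_def)
  moreover have "quad_form S I e = 0" "(\<Sum>j\<in>I. S a j * e j) = 0"
    using assms(2) unfolding quad_form_def e_def by (auto intro!: sum.neutral)
  then have "quad_form S (insert a I) e = S a a"
    using quad_form_insert[where S=S and y=e, OF assms(1,2) sym] by (simp add: e_def)
  ultimately show ?thesis by simp
qed

lemma pos_def_form_schur_complement:
  assumes "finite I" "a \<notin> I" and pd: "pos_def_form S (insert a I)"
  shows "pos_def_form (schur_complement S a) I"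
  unfolding pos_def_form_def
proof (intro conjI allI impI ballI)
  fix i j assume "i \<in> I" "j \<in> I"
  then have "S i j = S j i" "S i a = S a i" "S j a = S a j"
    using pos_def_form_sym[OF pd] by auto
  then show "schur_complement S a i j = schur_complement S a j i"
    unfolding schur_complement_def by (simp add: mult.commute)
next
  fix y :: "'a \<Rightarrow> real" assume nz: "\<exists>i\<in>I. y i \<noteq> 0"
  have sym: "\<And>j. j \<in> I \<Longrightarrow> S j a = S a j" using pos_def_form_sym[OF pd] by blast
  have pos: "0 < S a a" using pos_def_form_pivot_pos[OF assms] .
  txt \<open>Choosing the pivot coordinate to cancel the completed square isolates the Schur complement.\<close>
  define y' where "y' = y(a := - (\<Sum>j\<in>I. S a j * y j) / S a a)"
  have "(\<Sum>j\<in>I. S a j * y' j) = (\<Sum>j\<in>I. S a j * y j)"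
    unfolding y'_def using assms(2) by (intro sum.cong) auto
  moreover have "quad_form (schur_complement S a) I y' = quad_form (schur_complement S a) I y"
    unfolding y'_def using assms(2) by (intro quad_form_cong) auto
  moreover have "quad_form S (insert a I) y'
      = S a a * (y' a + (\<Sum>j\<in>I. S a j * y' j) / S a a)\<^sup>2 + quad_form (schur_complement S a) I y'"
    by (rule quad_form_schur_complement[where S=S, OF assms(1,2) sym pos])
  ultimately have "quad_form S (insert a I) y' = quad_form (schur_complement S a) I y"
    using pos unfolding y'_def by simp
  moreover have "0 < quad_form S (insert a I) y'"
  proof -
    obtain i where i: "i \<in> I" "y i \<noteq> 0" using nz by blast
    then have "y' i \<noteq> 0" using assms(2) unfolding y'_def by auto
    with i(1) show ?thesis by (intro pos_def_form_pos[OF pd]) blast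
  qed
  ultimately show "0 < quad_form (schur_complement S a) I y" by simp
qed

lemma quad_form_insert_sum_squares:
  assumes "finite I" "a \<notin> I" and sym: "\<And>j. j \<in> I \<Longrightarrow> S j a = S a j" and pos: "0 < S a a"
    and C': "\<And>y. quad_form (schur_complement S a) I y = (\<Sum>k\<in>I. (\<Sum>i\<in>I. C' k i * y i)\<^sup>2)"
  shows "\<exists>C. \<forall>y. quad_form S (insert a I) y = (\<Sum>k\<in>insert a I. (\<Sum>i\<in>insert a I. C k i * y i)\<^sup>2)"
proof (intro exI allI)
  fix y
  define C where "C k i = (if k = a then (if i = a then sqrt (S a a) else S a i / sqrt (S a a))
     else if i = a then 0 else C' k i)" for k i
  have pivot_row: "(\<Sum>i\<in>insert a I. C a i * y i) = sqrt (S a a) * (y a + (\<Sum>j\<in>I. S a j * y j) / S a a)"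
  proof -
    have "(\<Sum>i\<in>I. C a i * y i) = (\<Sum>j\<in>I. S a j * y j) / sqrt (S a a)"
      unfolding C_def sum_divide_distrib using assms(2) by (intro sum.cong) auto
    also have "\<dots> = sqrt (S a a) * ((\<Sum>j\<in>I. S a j * y j) / S a a)"
      using pos by (simp add: field_simps)
    finally show ?thesis using assms(1,2) by (simp add: C_def distrib_left)
  qed
  have other_rows: "(\<Sum>i\<in>insert a I. C k i * y i) = (\<Sum>i\<in>I. C' k i * y i)" if "k \<in> I" for k
    using that assms(1,2) unfolding C_def by (auto intro!: sum.cong)
  have "(\<Sum>k\<in>insert a I. (\<Sum>i\<in>insert a I. C k i * y i)\<^sup>2)
      = (\<Sum>i\<in>insert a I. C a i * y i)\<^sup>2 + (\<Sum>k\<in>I. (\<Sum>i\<in>insert a I. C k i * y i)\<^sup>2)"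
    by (rule sum.insert[OF assms(1,2)])
  also have "\<dots> = (sqrt (S a a) * (y a + (\<Sum>j\<in>I. S a j * y j) / S a a))\<^sup>2
      + (\<Sum>k\<in>I. (\<Sum>i\<in>I. C' k i * y i)\<^sup>2)"
    by (simp only: pivot_row other_rows cong: sum.cong)
  also have "\<dots> = quad_form S (insert a I) y"
    using pos by (simp add: quad_form_schur_complement[where S=S, OF assms(1,2) sym pos] C' power_mult_distrib)
  finally show "quad_form S (insert a I) y = (\<Sum>k\<in>insert a I. (\<Sum>i\<in>insert a I. C k i * y i)\<^sup>2)" ..
qed

lemma pos_def_form_sum_squares:
  assumes "finite I" "pos_def_form S I"
  shows "\<exists>C. \<forall>y. quad_form S I y = (\<Sum>k\<in>I. (\<Sum>i\<in>I. C k i * y i)\<^sup>2)"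
  using assms
proof (induction I arbitrary: S rule: finite_induct)
  case empty
  show ?case by (simp add: quad_form_def)
next
  case (insert a I)
  have sym: "\<And>j. j \<in> I \<Longrightarrow> S j a = S a j" using pos_def_form_sym[OF insert.prems] by blast
  have pos: "0 < S a a" using pos_def_form_pivot_pos[OF insert.hyps insert.prems] .
  obtain C' where C': "\<And>y. quad_form (schur_complement S a) I y = (\<Sum>k\<in>I. (\<Sum>i\<in>I. C' k i * y i)\<^sup>2)"
    using insert.IH[OF pos_def_form_schur_complement[OF insert.hyps insert.prems]] by blast
  show ?case by (rule quad_form_insert_sum_squares[where S=S, OF insert.hyps sym pos C'])
qed

lemma power2_norm_vec: "(norm x)\<^sup>2 = (\<Sum>i\<in>UNIV. (x $ i)\<^sup>2)"
  by (simp add: norm_vec_def L2_set_def sum_nonneg)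

lemma pos_def_quadratic_form_eq_norm_square:
  fixes M :: "real^'k^'k"
  assumes pd: "\<And>v. v \<noteq> 0 \<Longrightarrow> 0 < v \<bullet> (M *v v)"
  shows "\<exists>L :: real^'k^'k. \<forall>v. v \<bullet> (M *v v) = (norm (L *v v))\<^sup>2"
proof -
  define S where "S i j = (M $ i $ j + M $ j $ i) / 2" for i j
  have quad: "v \<bullet> (M *v v) = quad_form S UNIV (($) v)" for v
  proof -
    have "v \<bullet> (M *v v) = (\<Sum>i\<in>UNIV. \<Sum>j\<in>UNIV. M $ i $ j * v $ i * v $ j)"
      unfolding inner_vec_def matrix_vector_mult_def by (simp add: sum_distrib_left mult_ac)
    moreover have "\<dots> = (\<Sum>i\<in>UNIV. \<Sum>j\<in>UNIV. M $ j $ i * v $ i * v $ j)"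
      by (subst sum.swap) (simp add: mult_ac)
    moreover have "quad_form S UNIV (($) v) = ((\<Sum>i\<in>UNIV. \<Sum>j\<in>UNIV. M $ i $ j * v $ i * v $ j)
        + (\<Sum>i\<in>UNIV. \<Sum>j\<in>UNIV. M $ j $ i * v $ i * v $ j)) / 2"
      unfolding quad_form_def S_def
      by (simp add: add_divide_distrib distrib_right sum.distrib sum_divide_distrib)
    ultimately show ?thesis by simp
  qed
  have pd_S: "pos_def_form S UNIV"
    unfolding pos_def_form_def
  proof (intro conjI allI impI ballI)
    fix y :: "'k \<Rightarrow> real" assume "\<exists>i\<in>UNIV. y i \<noteq> 0"
    then have "vec_lambda y \<noteq> 0" by (metis vec_lambda_beta zero_index)
    then have "0 < quad_form S UNIV (($) (vec_lambda y))" unfolding quad[symmetric] by (rule pd)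
    also have "quad_form S UNIV (($) (vec_lambda y)) = quad_form S UNIV y"
      by (rule quad_form_cong) simp
    finally show "0 < quad_form S UNIV y" .
  qed (simp add: S_def)
  then obtain C :: "'k \<Rightarrow> 'k \<Rightarrow> real" where C: "\<And>y. quad_form S UNIV y = (\<Sum>k\<in>UNIV. (\<Sum>i\<in>UNIV. C k i * y i)\<^sup>2)"
    using pos_def_form_sum_squares[OF finite_class.finite_UNIV pd_S] by blast
  show ?thesis
  proof (intro exI allI)
    fix v
    have "(norm ((\<chi> k i. C k i) *v v))\<^sup>2 = (\<Sum>k\<in>UNIV. (\<Sum>i\<in>UNIV. C k i * v $ i)\<^sup>2)"
      by (simp add: power2_norm_vec matrix_vector_mult_def)
    then show "v \<bullet> (M *v v) = (norm ((\<chi> k i. C k i) *v v))\<^sup>2"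
      by (simp only: quad C)
  qed
qed

section \<open>Convexity\<close>

lemma convex_on_norm_affine:
  assumes "linear f"
  shows "convex_on UNIV (\<lambda>x. norm (f x + c))"
proof (rule convex_onI)
  fix t :: real and x y assume t: "0 < t" "t < 1"
  have "f ((1 - t) *\<^sub>R x + t *\<^sub>R y) + c = (1 - t) *\<^sub>R (f x + c) + t *\<^sub>R (f y + c)"
    by (simp only: linear_add[OF assms] linear_scale[OF assms]) (simp add: algebra_simps)
  then show "norm (f ((1 - t) *\<^sub>R x + t *\<^sub>R y) + c) \<le> (1 - t) * norm (f x + c) + t * norm (f y + c)"
    using norm_triangle_ineq[of "(1 - t) *\<^sub>R (f x + c)" "t *\<^sub>R (f y + c)"] t by simp
qed simp

lemma convex_on_power2_norm_diff: "convex_on UNIV (\<lambda>x. (norm (x - r))\<^sup>2)"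
proof (rule convex_onI)
  fix t :: real and x y :: 'a assume t: "0 < t" "t < 1"
  have "norm ((1 - t) *\<^sub>R x + t *\<^sub>R y - r) \<le> (1 - t) * norm (x - r) + t * norm (y - r)"
    using convex_onD[OF convex_on_dist[of UNIV r], of t x y] t by (simp add: dist_norm norm_minus_commute)
  then have "(norm ((1 - t) *\<^sub>R x + t *\<^sub>R y - r))\<^sup>2 \<le> ((1 - t) * norm (x - r) + t * norm (y - r))\<^sup>2"
    by (rule power_mono) simp
  also have "\<dots> \<le> (1 - t) * (norm (x - r))\<^sup>2 + t * (norm (y - r))\<^sup>2"
    using convex_onD[OF convex_power2, of t "norm (x - r)" "norm (y - r)"] t by simp
  finally show "(norm ((1 - t) *\<^sub>R x + t *\<^sub>R y - r))\<^sup>2 \<le> (1 - t) * (norm (x - r))\<^sup>2 + t * (norm (y - r))\<^sup>2" .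
qed simp

lemma concave_on_affine_inner: "concave_on UNIV (\<lambda>x. a + b \<bullet> x)"
  unfolding concave_on_iff
proof (intro conjI ballI allI impI)
  fix x y :: 'a and u v :: real assume "u + v = 1"
  then have "a * u + a * v = a" by (simp flip: distrib_left)
  then show "u * (a + b \<bullet> x) + v * (a + b \<bullet> y) \<le> a + b \<bullet> (u *\<^sub>R x + v *\<^sub>R y)"
    by (simp add: inner_add_right algebra_simps)
qed simp

lemma convex_problem_norm_soc_constraint:
  assumes "0 \<le> \<beta>" "linear f"
  shows "convex_problem (\<lambda>u. (norm (u - r))\<^sup>2) (\<lambda>u. a + b \<bullet> u - \<beta> * norm (f u + c))"
  unfolding convex_problem_def
  using convex_on_power2_norm_diff
    convex_on_diff[OF convex_on_cmul[OF assms(1) convex_on_norm_affine[OF assms(2)]] concave_on_affine_inner]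
  by simp

section \<open>Epigraph reformulation as a second-order cone program\<close>

lemma is_minimizer_cong:
  "(\<And>v. F v \<Longrightarrow> J v = J' v) \<Longrightarrow> is_minimizer F J u \<longleftrightarrow> is_minimizer F J' u"
  unfolding is_minimizer_def by auto

lemma is_minimizer_power2_iff:
  assumes "\<And>u. 0 \<le> N u"
  shows "is_minimizer F (\<lambda>u. (N u)\<^sup>2) u \<longleftrightarrow> is_minimizer F N u"
  unfolding is_minimizer_def using assms by (simp add: power2_le_iff_abs_le)

lemma is_minimizer_epigraph:
  "is_minimizer F N u \<longleftrightarrow>
     (\<exists>s. is_minimizer (\<lambda>(u, s). length s = 1 \<and> F u \<and> N u \<le> s ! 0) (\<lambda>(u, s). s ! 0) (u, s))"
proof
  assume "is_minimizer F N u"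
  then have "is_minimizer (\<lambda>(u, s). length s = 1 \<and> F u \<and> N u \<le> s ! 0) (\<lambda>(u, s). s ! 0) (u, [N u])"
    unfolding is_minimizer_def by (auto intro: order_trans)
  then show "\<exists>s. is_minimizer (\<lambda>(u, s). length s = 1 \<and> F u \<and> N u \<le> s ! 0) (\<lambda>(u, s). s ! 0) (u, s)" ..
next
  assume "\<exists>s. is_minimizer (\<lambda>(u, s). length s = 1 \<and> F u \<and> N u \<le> s ! 0) (\<lambda>(u, s). s ! 0) (u, s)"
  then obtain s where feasible: "F u" "N u \<le> s ! 0"
    and least: "\<And>v t. length t = 1 \<Longrightarrow> F v \<Longrightarrow> N v \<le> t ! 0 \<Longrightarrow> s ! 0 \<le> t ! 0"
    unfolding is_minimizer_def by auto
  have "N u \<le> N v" if "F v" for v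
    using feasible(2) least[of "[N v]" v] that by simp
  with feasible(1) show "is_minimizer F N u" unfolding is_minimizer_def by blast
qed

definition univ_list :: "'a::finite list" where
  "univ_list = (SOME xs. set xs = UNIV \<and> distinct xs)"

lemma univ_list: "set (univ_list :: 'a::finite list) = UNIV \<and> distinct (univ_list :: 'a list)"
proof -
  obtain xs :: "'a list" where "set xs = UNIV \<and> distinct xs"
    using finite_distinct_list[OF finite_class.finite_UNIV] by blast
  then show ?thesis unfolding univ_list_def by (rule someI)
qed

lemma sum_list_univ_list: "(\<Sum>i\<leftarrow>univ_list. f i) = (\<Sum>i\<in>UNIV. f i)"
  by (subst sum.distinct_set_conv_list[symmetric]) (simp_all add: univ_list)

definition cone_rows :: "real^'m^'k::finite \<Rightarrow> real^'k \<Rightarrow> 'm::finite aff list" where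
  "cone_rows A c = map (\<lambda>i. (A $ i, [0], c $ i)) univ_list"

lemma aff_eval_singleton [simp]: "aff_eval (a, [b], d) u [t] = a \<bullet> u + b * t + d"
  by (simp add: aff_eval_def)

lemma norm_cone_rows: "sqrt (\<Sum>l\<leftarrow>cone_rows A c. (aff_eval l u [t])\<^sup>2) = norm (A *v u + c)"
proof -
  have "aff_eval (A $ i, [0], c $ i) u [t] = (A *v u + c) $ i" for i
    by (simp add: matrix_vector_mult_def inner_vec_def mult.commute)
  then show ?thesis
    unfolding cone_rows_def by (simp add: comp_def sum_list_univ_list norm_vec_def L2_set_def)
qed

definition epigraph_soc_constraints ::
  "real \<Rightarrow> real^'m \<Rightarrow> real \<Rightarrow> real^'m^'k::finite \<Rightarrow> real^'k \<Rightarrow> real^'m::finite \<Rightarrow> ('m aff list \<times> 'm aff) list"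
  where
  "epigraph_soc_constraints a b \<beta> A c r =
     [(cone_rows (\<beta> *\<^sub>R A) (\<beta> *\<^sub>R c), (b, [0], a)), (cone_rows (mat 1) (- r), (0, [1], 0))]"

lemma soc_feasible_epigraph_soc_constraints:
  assumes "0 \<le> \<beta>"
  shows "soc_feasible (epigraph_soc_constraints a b \<beta> A c r) u [t] \<longleftrightarrow>
           \<beta> * norm (A *v u + c) \<le> a + b \<bullet> u \<and> norm (u - r) \<le> t"
proof -
  have "(\<beta> *\<^sub>R A) *v u + \<beta> *\<^sub>R c = \<beta> *\<^sub>R (A *v u + c)"
    by (simp add: scaleR_matrix_vector_assoc scaleR_add_right)
  then show ?thesis
    using assms by (simp add: soc_feasible_def epigraph_soc_constraints_def norm_cone_rows add.commute)
qed

lemma socp_norm_objective_soc_constraint: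
  fixes a \<beta> :: real and b r :: "real^'m::finite" and A :: "real^'m^'k::finite" and c :: "real^'k"
  assumes "0 \<le> \<beta>"
  defines "h \<equiv> \<lambda>u. a + b \<bullet> u - \<beta> * norm (A *v u + c)"
    and "cons \<equiv> epigraph_soc_constraints a b \<beta> A c r"
  shows socp_feasible_iff: "0 \<le> h u \<longleftrightarrow> (\<exists>s. length s = 1 \<and> soc_feasible cons u s)"
    and socp_minimizer_iff: "is_minimizer (\<lambda>u. 0 \<le> h u) (\<lambda>u. (norm (u - r))\<^sup>2) u
           \<longleftrightarrow> (\<exists>s. socp_minimizer 1 (0, [1]) cons u s)"
proof -
  have feasible: "length s = 1 \<and> soc_feasible cons v s \<longleftrightarrow> length s = 1 \<and> 0 \<le> h v \<and> norm (v - r) \<le> s ! 0"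
    for v s
  proof (cases "length s = 1")
    case True
    then obtain t where s: "s = [t]" by (cases s) auto
    show ?thesis
      unfolding s h_def cons_def using soc_feasible_epigraph_soc_constraints[OF assms(1)] by simp
  qed simp
  show "0 \<le> h u \<longleftrightarrow> (\<exists>s. length s = 1 \<and> soc_feasible cons u s)"
  proof
    assume "0 \<le> h u"
    then have "length [norm (u - r)] = 1 \<and> soc_feasible cons u [norm (u - r)]"
      using feasible[of "[norm (u - r)]" u] by simp
    then show "\<exists>s. length s = 1 \<and> soc_feasible cons u s" ..
  qed (use feasible in blast)
  have socp_epigraph: "socp_minimizer 1 (0, [1]) cons u s \<longleftrightarrow>
      is_minimizer (\<lambda>(u, s). length s = 1 \<and> 0 \<le> h u \<and> norm (u - r) \<le> s ! 0) (\<lambda>(u, s). s ! 0) (u, s)" for s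
    unfolding socp_minimizer_def feasible
    by (rule is_minimizer_cong) (auto simp: lin_obj_def)
  have "is_minimizer (\<lambda>u. 0 \<le> h u) (\<lambda>u. (norm (u - r))\<^sup>2) u
      \<longleftrightarrow> is_minimizer (\<lambda>u. 0 \<le> h u) (\<lambda>u. norm (u - r)) u"
    by (rule is_minimizer_power2_iff) simp
  also have "\<dots> \<longleftrightarrow> (\<exists>s. is_minimizer (\<lambda>(u, s). length s = 1 \<and> 0 \<le> h u \<and> norm (u - r) \<le> s ! 0)
      (\<lambda>(u, s). s ! 0) (u, s))"
    by (rule is_minimizer_epigraph)
  also have "\<dots> \<longleftrightarrow> (\<exists>s. socp_minimizer 1 (0, [1]) cons u s)"
    by (simp only: socp_epigraph)
  finally show "is_minimizer (\<lambda>u. 0 \<le> h u) (\<lambda>u. (norm (u - r))\<^sup>2) u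
      \<longleftrightarrow> (\<exists>s. socp_minimizer 1 (0, [1]) cons u s)" .
qed

section \<open>The GP-CBF constraint\<close>

lemma sum_UNIV_option:
  fixes f :: "'a::finite option \<Rightarrow> 'b::comm_monoid_add"
  shows "(\<Sum>i\<in>UNIV. f i) = f None + (\<Sum>j\<in>UNIV. f (Some j))"
  unfolding UNIV_option_conv by (simp add: sum.reindex)

lemma inner_yvec: "v \<bullet> yvec u = v $ None + (\<chi> j. v $ Some j) \<bullet> u"
  unfolding yvec_def inner_vec_def by (simp add: sum_UNIV_option)

lemma matrix_vector_mult_yvec: "L *v yvec u = (\<chi> i j. L $ i $ Some j) *v u + (\<chi> i. L $ i $ None)"
  unfolding yvec_def matrix_vector_mult_def by (simp add: vec_eq_iff sum_UNIV_option add.commute)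

theorem theorem1:
  fixes X :: "(real^'n) set"
    and ft :: "real^'n \<Rightarrow> real^'n" and gt :: "real^'n \<Rightarrow> real^'m^'n"
    and B :: "real^'n \<Rightarrow> real" and gradB :: "real^'n \<Rightarrow> real^'n"
    and \<gamma> :: "real \<Rightarrow> real" and uref :: "real^'n \<Rightarrow> real^'m"
    and k :: "'m option \<Rightarrow> real^'n \<Rightarrow> real^'n \<Rightarrow> real"
    and xs :: "'d::finite \<Rightarrow> real^'n" and us :: "'d \<Rightarrow> real^'m" and z :: "real^'d"
    and \<sigma>n \<beta> :: real and x :: "real^'n"
  assumes B_C1: "\<And>x'. x' \<in> X \<Longrightarrow> (B has_derivative (\<lambda>h. gradB x' \<bullet> h)) (at x' within X)"
    and gradB_cont: "continuous_on X gradB"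
    and gamma: "ext_class_K_inf \<gamma>"
    and kernels: "\<And>i. psd_kernel (k i)"
    and data: "\<And>j. xs j \<in> X"
    and sigma_n: "\<sigma>n > 0"
    and beta: "\<beta> > 0"
    and x_in: "x \<in> X"
    and Sigma_pd: "\<And>v. v \<noteq> 0 \<Longrightarrow> v \<bullet> (SigmaB k xs us \<sigma>n x *v v) > 0"
  defines "J \<equiv> (\<lambda>u. (norm (u - uref x))\<^sup>2)"
    and "h \<equiv> (\<lambda>u. Lie_f gradB ft x + Lie_g gradB gt x \<bullet> u + muB k xs us z \<sigma>n x u
                    - \<beta> * sigB k xs us \<sigma>n x u + \<gamma> (B x))"
  shows "convex_problem J h \<and>
         (\<exists>p c cons.
            (\<forall>u. h u \<ge> 0 \<longleftrightarrow> (\<exists>s. length s = p \<and> soc_feasible cons u s)) \<and>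
            (\<forall>u. is_minimizer (\<lambda>u. h u \<ge> 0) J u \<longleftrightarrow>
                  (\<exists>s. socp_minimizer p c cons u s)))"
proof -
  from pos_def_quadratic_form_eq_norm_square[OF Sigma_pd]
  obtain L :: "real^'m option^'m option" where L: "\<forall>v. v \<bullet> (SigmaB k xs us \<sigma>n x *v v) = (norm (L *v v))\<^sup>2" ..
  define A where "A = (\<chi> i j. L $ i $ Some j)"
  define c where "c = (\<chi> i. L $ i $ None)"
  define m where "m = mB k xs us z \<sigma>n x"
  define a where "a = Lie_f gradB ft x + m $ None + \<gamma> (B x)"
  define b where "b = Lie_g gradB gt x + (\<chi> j. m $ Some j)"
  have h_soc: "h = (\<lambda>u. a + b \<bullet> u - \<beta> * norm (A *v u + c))"
  proof
    fix u
    have "sigB k xs us \<sigma>n x u = sqrt ((norm (L *v yvec u))\<^sup>2)"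
      unfolding sigB_def L[rule_format] ..
    also have "\<dots> = norm (A *v u + c)"
      unfolding A_def c_def matrix_vector_mult_yvec by simp
    finally have "sigB k xs us \<sigma>n x u = norm (A *v u + c)" .
    moreover have "muB k xs us z \<sigma>n x u = m $ None + (\<chi> j. m $ Some j) \<bullet> u"
      unfolding muB_def m_def inner_yvec ..
    ultimately show "h u = a + b \<bullet> u - \<beta> * norm (A *v u + c)"
      unfolding h_def a_def b_def inner_add_left by simp
  qed
  have "0 \<le> \<beta>" using beta by simp
  let ?cons = "epigraph_soc_constraints a b \<beta> A c (uref x)"
  have "convex_problem J h"
    unfolding J_def h_soc by (rule convex_problem_norm_soc_constraint[OF \<open>0 \<le> \<beta>\<close> matrix_vector_mul_linear])
  moreover have "\<forall>u. h u \<ge> 0 \<longleftrightarrow> (\<exists>s. length s = 1 \<and> soc_feasible ?cons u s)"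
    unfolding h_soc using socp_feasible_iff[OF \<open>0 \<le> \<beta>\<close>] by blast
  moreover have "\<forall>u. is_minimizer (\<lambda>u. h u \<ge> 0) J u \<longleftrightarrow> (\<exists>s. socp_minimizer 1 (0, [1]) ?cons u s)"
    unfolding J_def h_soc using socp_minimizer_iff[OF \<open>0 \<le> \<beta>\<close>] by blast
  ultimately show ?thesis by blast
qed

end
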